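(* Let $\mathcal{P}$ be a profile of unrooted phylogenetic trees whose display graph $G(\mathcal{P})$ is connected, and let $F_1,F_2$ be two parallel nice minimal cuts of $G(\mathcal{P})$. Then the splits $\sigma(F_1)$ and $\sigma(F_2)$ are compatible.
   Context: A phylogenetic tree $T$ is an unrooted tree whose leaves are bijectively labeled by $\mathcal{L}(T)$ (leaves identified with labels; internal vertices have degree at least three). A profile $\mathcal{P}=\{T_1,\dots,T_k\}$ is a finite collection of phylogenetic trees, $\mathcal{L}(\mathcal{P})=\bigcup_i\mathcal{L}(T_i)$; internal vertices of distinct trees are disjoint, while leaves with the same label are the same vertex. The display graph $G(\mathcal{P})$ has vertex set $\bigcup_i V(T_i)$ and edge set $\bigcup_i E(T_i)$. For a vertex $u$ of an input tree, $\mathrm{Inc}(u)$ is the set of edges of $G(\mathcal{P})$ incident with $u$. A cut of a connected graph $G$ is $F\subseteq E(G)$ with $G-F$ disconnected; minimal if no proper subset is a cut. Minimal cuts $F,F'$ are parallel if $G-F$ has at most one component $H$ with $E(H)\cap F'\neq\emptyset$. A cut $F$ of $G(\mathcal{P})$ is legal if for every $T\in\mathcal{P}$ there is $u\in V(T)$ with $F\cap E(T)\subseteq\mathrm{Inc}(u)$; nice if legal and every component of $G(\mathcal{P})-F$ contains at least one edge. For a nice minimal cut $F$ with components $G_1,G_2$ of $G(\mathcal{P})-F$, $\sigma(F)=\mathcal{L}(G_1)|\mathcal{L}(G_2)$, where $\mathcal{L}(G_i)$ is the set of leaves in $G_i$; this is a bipartition of $\mathcal{L}(\mathcal{P})$ into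 nonempty sets (a split). Two splits $A_1|A_2$ and $B_1|B_2$ are compatible if some phylogenetic tree displays both, equivalently if at least one of $A_i\cap B_j$ ($i,j\in\{1,2\}$) is empty. *)

theory Defs
  imports Main
begin

text \<open>Simple graphs: vertex set V, edge set E of 2-element subsets of V.
  Vertices of the display graph and leaf labels live in the same type 'v
  (leaves are identified with their labels).\<close>

definition adj :: "'v set set \<Rightarrow> ('v \<times> 'v) set" where
  "adj E = {(u, w). {u, w} \<in> E}"

definition is_graph :: "'v set \<Rightarrow> 'v set set \<Rightarrow> bool" where
  "is_graph V E \<longleftrightarrow> finite V \<and> (\<forall>e\<in>E. card e = 2 \<and> e \<subseteq> V)"

definition connected_graph :: "'v set \<Rightarrow> 'v set set \<Rightarrow> bool" where
  "connected_graph V E \<longleftrightarrow> V \<noteq> {} \<and> (\<forall>u\<in>V. \<forall>w\<in>V. (u, w) \<in> (adj E)\<^sup>*)"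

definition comp_of :: "'v set \<Rightarrow> 'v set set \<Rightarrow> 'v \<Rightarrow> 'v set" where
  "comp_of V E v = {w \<in> V. (v, w) \<in> (adj E)\<^sup>*}"

definition components :: "'v set \<Rightarrow> 'v set set \<Rightarrow> 'v set set" where
  "components V E = comp_of V E ` V"

definition degree :: "'v set set \<Rightarrow> 'v \<Rightarrow> nat" where
  "degree E v = card {e \<in> E. v \<in> e}"

definition phylo_tree :: "'v set \<Rightarrow> 'v set set \<Rightarrow> 'v set \<Rightarrow> bool" where
  "phylo_tree V E Lf \<longleftrightarrow> is_graph V E \<and> connected_graph V E \<and> card E + 1 = card V
     \<and> Lf = {v \<in> V. degree E v \<le> 1} \<and> (\<forall>v \<in> V - Lf. degree E v \<ge> 3)"

text \<open>A profile: finitely many trees indexed by I; internal vertices of distinct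
  trees are disjoint (and are not vertices of other trees); leaves are shared by label.\<close>
definition profile :: "'i set \<Rightarrow> ('i \<Rightarrow> 'v set) \<Rightarrow> ('i \<Rightarrow> 'v set set) \<Rightarrow> ('i \<Rightarrow> 'v set) \<Rightarrow> bool" where
  "profile I V E Lf \<longleftrightarrow> finite I \<and> (\<forall>i\<in>I. phylo_tree (V i) (E i) (Lf i))
     \<and> (\<forall>i\<in>I. \<forall>j\<in>I. i \<noteq> j \<longrightarrow> (V i - Lf i) \<inter> V j = {})"

definition leaves_P :: "'i set \<Rightarrow> ('i \<Rightarrow> 'v set) \<Rightarrow> 'v set" where
  "leaves_P I Lf = \<Union> (Lf ` I)"

definition DV :: "'i set \<Rightarrow> ('i \<Rightarrow> 'v set) \<Rightarrow> 'v set" where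
  "DV I V = \<Union> (V ` I)"

definition DE :: "'i set \<Rightarrow> ('i \<Rightarrow> 'v set set) \<Rightarrow> 'v set set" where
  "DE I E = \<Union> (E ` I)"

definition Inc :: "'v set set \<Rightarrow> 'v \<Rightarrow> 'v set set" where
  "Inc GE u = {e \<in> GE. u \<in> e}"

definition is_cut :: "'v set \<Rightarrow> 'v set set \<Rightarrow> 'v set set \<Rightarrow> bool" where
  "is_cut V E F \<longleftrightarrow> F \<subseteq> E \<and> \<not> connected_graph V (E - F)"

definition minimal_cut :: "'v set \<Rightarrow> 'v set set \<Rightarrow> 'v set set \<Rightarrow> bool" where
  "minimal_cut V E F \<longleftrightarrow> is_cut V E F \<and> (\<forall>F'. F' \<subset> F \<longrightarrow> \<not> is_cut V E F')"

definition parallel :: "'v set \<Rightarrow> 'v set set \<Rightarrow> 'v set set \<Rightarrow> 'v set set \<Rightarrow> bool" where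
  "parallel V E F F' \<longleftrightarrow>
     (\<forall>C1 \<in> components V (E - F). \<forall>C2 \<in> components V (E - F).
        (\<exists>e \<in> E - F. e \<subseteq> C1 \<and> e \<in> F') \<longrightarrow> (\<exists>e \<in> E - F. e \<subseteq> C2 \<and> e \<in> F') \<longrightarrow> C1 = C2)"

definition legal_cut :: "'i set \<Rightarrow> ('i \<Rightarrow> 'v set) \<Rightarrow> ('i \<Rightarrow> 'v set set) \<Rightarrow> 'v set set \<Rightarrow> bool" where
  "legal_cut I V E F \<longleftrightarrow> is_cut (DV I V) (DE I E) F
     \<and> (\<forall>i\<in>I. \<exists>u \<in> V i. F \<inter> E i \<subseteq> Inc (DE I E) u)"

definition nice_cut :: "'i set \<Rightarrow> ('i \<Rightarrow> 'v set) \<Rightarrow> ('i \<Rightarrow> 'v set set) \<Rightarrow> 'v set set \<Rightarrow> bool" where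
  "nice_cut I V E F \<longleftrightarrow> legal_cut I V E F
     \<and> (\<forall>C \<in> components (DV I V) (DE I E - F). \<exists>e \<in> DE I E - F. e \<subseteq> C)"

text \<open>sigma(F): the split, represented as the (unordered) set of the leaf sets of
  the components of G(P) - F.\<close>
definition sigma :: "'i set \<Rightarrow> ('i \<Rightarrow> 'v set) \<Rightarrow> ('i \<Rightarrow> 'v set set) \<Rightarrow> ('i \<Rightarrow> 'v set) \<Rightarrow> 'v set set \<Rightarrow> 'v set set" where
  "sigma I V E Lf F = (\<lambda>C. C \<inter> leaves_P I Lf) ` components (DV I V) (DE I E - F)"

definition compatible :: "'v set set \<Rightarrow> 'v set set \<Rightarrow> bool" where
  "compatible S1 S2 \<longleftrightarrow> (\<exists>A \<in> S1. \<exists>B \<in> S2. A \<inter> B = {})"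

end

theory Submission
  imports Defs
begin

text \<open>Parallelism of F1 and F2 means that some side C of G(P) - F1 contains no edge of F2.
  Every path inside C then survives in G(P) - F2, so C lies within a single side of F2;
  any other side of F2 is disjoint from C, and the corresponding leaf sets are disjoint.\<close>

lemma sym_adj: "sym (adj E)"
  unfolding sym_def adj_def by (auto simp: insert_commute)

lemma adj_rtrancl_sym: "(a, b) \<in> (adj E)\<^sup>* \<Longrightarrow> (b, a) \<in> (adj E)\<^sup>*"
  using sym_rtrancl[OF sym_adj] by (meson symD)

lemma comp_of_self: "v \<in> V \<Longrightarrow> v \<in> comp_of V E v"
  by (simp add: comp_of_def)

lemma comp_of_in_components: "v \<in> V \<Longrightarrow> comp_of V E v \<in> components V E"
  by (simp add: components_def)

lemma comp_of_disjoint: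
  assumes "y \<in> V" "y \<notin> comp_of V E x"
  shows "comp_of V E x \<inter> comp_of V E y = {}"
proof (rule ccontr)
  assume "comp_of V E x \<inter> comp_of V E y \<noteq> {}"
  then obtain z where "(x, z) \<in> (adj E)\<^sup>*" "(y, z) \<in> (adj E)\<^sup>*"
    by (auto simp: comp_of_def)
  then have "(x, y) \<in> (adj E)\<^sup>*" by (rule rtrancl_trans[OF _ adj_rtrancl_sym])
  with assms show False by (simp add: comp_of_def)
qed

lemma disconnected_obtains_disjoint_comp_of:
  assumes "\<not> connected_graph V E" "V \<noteq> {}"
  obtains y where "y \<in> V" "comp_of V E x \<inter> comp_of V E y = {}"
proof -
  obtain a b where ab: "a \<in> V" "b \<in> V" "(a, b) \<notin> (adj E)\<^sup>*"
    using assms by (auto simp: connected_graph_def)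
  have "a \<notin> comp_of V E x \<or> b \<notin> comp_of V E x"
  proof (rule ccontr)
    assume "\<not> ?thesis"
    then have "(x, a) \<in> (adj E)\<^sup>*" "(x, b) \<in> (adj E)\<^sup>*" by (auto simp: comp_of_def)
    then have "(a, b) \<in> (adj E)\<^sup>*" by (rule rtrancl_trans[OF adj_rtrancl_sym])
    with ab show False by simp
  qed
  with ab comp_of_disjoint show ?thesis by (metis that)
qed

lemma comp_of_mono_edges:
  assumes "\<forall>e\<in>E. e \<subseteq> V"
    and "\<forall>e\<in>E. e \<subseteq> comp_of V E v \<longrightarrow> e \<in> E'"
  shows "comp_of V E v \<subseteq> comp_of V E' v"
proof
  fix w assume "w \<in> comp_of V E v"
  then have "w \<in> V" and path: "(v, w) \<in> (adj E)\<^sup>*" by (auto simp: comp_of_def)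
  from path have "(v, w) \<in> (adj E')\<^sup>*"
  proof (induction rule: rtrancl_induct)
    case base
    then show ?case by simp
  next
    case (step a b)
    have e: "{a, b} \<in> E" using step.hyps(2) by (simp add: adj_def)
    with assms(1) have "a \<in> V" "b \<in> V" by auto
    moreover have "(v, b) \<in> (adj E)\<^sup>*" using step.hyps by (rule rtrancl_into_rtrancl)
    ultimately have "{a, b} \<subseteq> comp_of V E v"
      using step.hyps(1) by (auto simp: comp_of_def)
    with assms(2) e have "(a, b) \<in> adj E'" by (simp add: adj_def)
    with step.IH show ?case by simp
  qed
  with \<open>w \<in> V\<close> show "w \<in> comp_of V E' v" by (simp add: comp_of_def)
qed

lemma parallel_obtains_comp_of_avoiding:
  assumes "parallel V E F F'" "is_cut V E F" "V \<noteq> {}"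
  obtains x where "x \<in> V" "\<forall>e\<in>E - F. e \<subseteq> comp_of V (E - F) x \<longrightarrow> e \<notin> F'"
proof -
  obtain u where u: "u \<in> V" using assms(3) by blast
  have "\<not> connected_graph V (E - F)" using assms(2) by (simp add: is_cut_def)
  then obtain y where y: "y \<in> V" "comp_of V (E - F) u \<inter> comp_of V (E - F) y = {}"
    using assms(3) by (rule disconnected_obtains_disjoint_comp_of)
  have "comp_of V (E - F) u \<noteq> comp_of V (E - F) y"
    using y u comp_of_self by fastforce
  moreover have "comp_of V (E - F) u \<in> components V (E - F)"
    and "comp_of V (E - F) y \<in> components V (E - F)"
    using u y(1) by (simp_all add: comp_of_in_components)
  ultimately have
    "(\<forall>e\<in>E - F. e \<subseteq> comp_of V (E - F) u \<longrightarrow> e \<notin> F') \<or>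
     (\<forall>e\<in>E - F. e \<subseteq> comp_of V (E - F) y \<longrightarrow> e \<notin> F')"
    using assms(1) unfolding parallel_def by blast
  with that u y(1) show ?thesis by blast
qed

lemma profile_edges_subset_DV:
  assumes "profile I V E Lf"
  shows "\<forall>e\<in>DE I E. e \<subseteq> DV I V"
proof
  fix e assume "e \<in> DE I E"
  then obtain i where i: "i \<in> I" "e \<in> E i" by (auto simp: DE_def)
  with assms have "e \<subseteq> V i" by (simp add: profile_def phylo_tree_def is_graph_def)
  with i(1) show "e \<subseteq> DV I V" by (auto simp: DV_def)
qed

theorem lemma11:
  fixes I :: "'i set" and V :: "'i \<Rightarrow> 'v set" and E :: "'i \<Rightarrow> 'v set set"
    and Lf :: "'i \<Rightarrow> 'v set" and F1 F2 :: "'v set set"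
  assumes "profile I V E Lf"
    and "connected_graph (DV I V) (DE I E)"
    and "nice_cut I V E F1" and "minimal_cut (DV I V) (DE I E) F1"
    and "nice_cut I V E F2" and "minimal_cut (DV I V) (DE I E) F2"
    and "parallel (DV I V) (DE I E) F1 F2"
  shows "compatible (sigma I V E Lf F1) (sigma I V E Lf F2)"
proof -
  let ?G = "DV I V" and ?L = "leaves_P I Lf"
  have nonempty: "?G \<noteq> {}" using assms(2) by (simp add: connected_graph_def)
  have cut1: "is_cut ?G (DE I E) F1" and cut2: "is_cut ?G (DE I E) F2"
    using assms(4,6) by (simp_all add: minimal_cut_def)
  obtain x where x: "x \<in> ?G" "\<forall>e\<in>DE I E - F1. e \<subseteq> comp_of ?G (DE I E - F1) x \<longrightarrow> e \<notin> F2"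
    using parallel_obtains_comp_of_avoiding[OF assms(7) cut1 nonempty] by blast
  have "comp_of ?G (DE I E - F1) x \<subseteq> comp_of ?G (DE I E - F2) x"
    using profile_edges_subset_DV[OF assms(1)] x(2) by (intro comp_of_mono_edges) auto
  moreover obtain y where y: "y \<in> ?G" "comp_of ?G (DE I E - F2) x \<inter> comp_of ?G (DE I E - F2) y = {}"
    using cut2 nonempty unfolding is_cut_def by (metis disconnected_obtains_disjoint_comp_of)
  ultimately have "(comp_of ?G (DE I E - F1) x \<inter> ?L) \<inter> (comp_of ?G (DE I E - F2) y \<inter> ?L) = {}"
    by blast
  moreover have "comp_of ?G (DE I E - F1) x \<inter> ?L \<in> sigma I V E Lf F1"
    and "comp_of ?G (DE I E - F2) y \<inter> ?L \<in> sigma I V E Lf F2"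
    using x(1) y(1) by (simp_all add: sigma_def comp_of_in_components)
  ultimately show ?thesis unfolding compatible_def by blast
qed

end
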